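(* Let $k,\ell\in\mathbb N$ with $\ell\le k$, $G\in\mathscr S^{(k)}$, $H\in\mathscr S^{(\ell)}$, $\sigma\in\{-1,0,1\}$ and $\vartheta\in\Theta$. Then for all $N\in\mathbb N$, $$E_{\mu_\vartheta}\big[\langle G,\mathscr X^{(k)N}\rangle\big]\,E_{\mu_\vartheta}\big[\langle H,\mathscr X^{(\ell)N}\rangle\big]=\sum_{h=0}^\ell\frac{\vartheta^h(-\sigma)^h}{N^{hd}}\,E_{\mu_\vartheta}\big[\langle\{G\otimes H\}^{(k+\ell-h)},\mathscr X^{(k+\ell-h)N}\rangle\big],$$ where $\langle\{G\otimes H\}^{(k+\ell-h)},\mathscr X^{(k+\ell-h)N}\rangle:=N^{-(k+\ell-h)d}\sum_{\mathbf x\in(\mathbb Z^d)^k}\sum_{\mathbf y\in(\mathbb Z^d)^\ell}G(\tfrac{\mathbf x}{N})H(\tfrac{\mathbf y}{N})\{\eta|(\mathbf x,\mathbf y)\}^{(k+\ell-h)}$.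
   Context: $\alpha\in\mathbb N$, $\sigma\in\{-1,0,1\}$, $\Theta=[0,1]$ if $\sigma=-1$, $[0,\infty)$ otherwise. $\mu_\vartheta$ is the product measure on $\mathbb N_0^{\mathbb Z^d}$ with marginals $\mathrm{Bin}(\alpha,\vartheta)$ ($\sigma=-1$), $\mathrm{Poisson}(\alpha\vartheta)$ ($\sigma=0$), negative binomial with shape $\alpha$, mean $\alpha\vartheta$, variance $\alpha\vartheta(1+\vartheta)$ ($\sigma=1$); it satisfies $E_{\mu_\vartheta}[[\eta]_{\mathbf x}]=\vartheta^k\pi(\mathbf x)$, $\mathbf x\in(\mathbb Z^d)^k$, with $\pi(\mathbf x):=\alpha(\alpha+\sigma\mathbf 1_{\{x_2=x_1\}})\cdots(\alpha+\sigma\sum_{j<k}\mathbf 1_{\{x_k=x_j\}})$ and $[\eta]_{\mathbf x}:=\eta(x_1)(\eta(x_2)-\mathbf 1_{\{x_2=x_1\}})\cdots(\eta(x_k)-\sum_{j<k}\mathbf 1_{\{x_k=x_j\}})$. $\mathscr S^{(k)}:=\mathscr S(\mathbb R^{kd})$; $\langle G,\mathscr X^{(k)N}\rangle:=N^{-kd}\sum_{\mathbf x}G(\mathbf x/N)[\eta]_{\mathbf x}$. For $\mathbf y=(y_1,\dots,y_\ell)$: $\{\eta|(\mathbf x,\mathbf y)\}^{(k+\ell-h)}:=\sum_{\mathcal J\subseteq\{1..\ell\},|\mathcal J|=h}[\eta]_{\mathbf x\,\widehat{\mathbf y}_{\mathcal J}}\sum_{i:\mathcal J\to\{1..k\}\text{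 one-to-one}}\prod_{j\in\mathcal J}\mathbf 1_{\{y_j=x_{i_j}\}}$, with $\mathbf x\,\widehat{\mathbf y}_{\mathcal J}$ the concatenation of $\mathbf x$ with $\mathbf y$ after deleting the entries indexed by $\mathcal J$. *)

theory Defs
  imports "HOL-Probability.Probability"
begin

text \<open>Sites of the lattice Z^d are elements of int^'d, 'd a finite index type with d = CARD('d).
  A point of (Z^d)^k (resp. R^(kd)) is a list of length k of such vectors.\<close>

definition scale_site :: "nat \<Rightarrow> int ^ 'd \<Rightarrow> real ^ 'd" where
  "scale_site N x = (\<chi> i. real_of_int (x $ i) / real N)"

text \<open>Partial derivative of F in the coordinate (j,i) (j-th point, i-th component),
  required to exist at every point of (R^d)^k.\<close>
definition has_partial ::
  "nat \<Rightarrow> nat \<Rightarrow> 'd::finite \<Rightarrow> ((real ^ 'd) list \<Rightarrow> real) \<Rightarrow> ((real ^ 'd) list \<Rightarrow> real) \<Rightarrow> bool" where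
  "has_partial k j i F F' \<longleftrightarrow>
     (\<forall>xs. length xs = k \<longrightarrow>
        ((\<lambda>t. F (xs[j := xs ! j + t *\<^sub>R axis i 1])) has_real_derivative F' xs) (at 0))"

inductive iter_partial ::
  "nat \<Rightarrow> ((real ^ 'd::finite) list \<Rightarrow> real) \<Rightarrow> ((real ^ 'd) list \<Rightarrow> real) \<Rightarrow> bool"
  for k F where
  base: "iter_partial k F F"
| step: "iter_partial k F D \<Longrightarrow> j < k \<Longrightarrow> has_partial k j i D D' \<Longrightarrow> iter_partial k F D'"

definition list_norm :: "(real ^ 'd) list \<Rightarrow> real" where
  "list_norm xs = sqrt (\<Sum>j<length xs. (norm (xs ! j))\<^sup>2)"

definition schwartz :: "nat \<Rightarrow> ((real ^ 'd::finite) list \<Rightarrow> real) \<Rightarrow> bool" where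
  "schwartz k F \<longleftrightarrow>
     (\<forall>D. iter_partial k F D \<longrightarrow>
        (\<forall>j<k. \<forall>i. \<exists>D'. has_partial k j i D D') \<and>
        (\<forall>xs. length xs = k \<longrightarrow>
           (\<forall>xn. (\<forall>n. length (xn n) = k) \<longrightarrow> (\<forall>j<k. (\<lambda>n. xn n ! j) \<longlonglongrightarrow> xs ! j)
                  \<longrightarrow> (\<lambda>n. D (xn n)) \<longlonglongrightarrow> D xs)) \<and>
        (\<forall>m::nat. \<exists>C. \<forall>xs. length xs = k \<longrightarrow> (1 + list_norm xs) ^ m * \<bar>D xs\<bar> \<le> C))"

text \<open>[eta]_x = eta(x_1)(eta(x_2) - 1{x_2=x_1}) ... (eta(x_k) - sum_{j<k} 1{x_k=x_j}).\<close>
definition fmom :: "(int ^ 'd \<Rightarrow> nat) \<Rightarrow> (int ^ 'd) list \<Rightarrow> real" where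
  "fmom \<eta> xs = (\<Prod>m<length xs.
      real (\<eta> (xs ! m)) - real (card {j. j < m \<and> xs ! j = xs ! m}))"

text \<open>Marginal law: Bin(alpha,theta) (sigma=-1), Poisson(alpha theta) (sigma=0),
  negative binomial with shape alpha and mean alpha theta (sigma=1), i.e. the number of failures
  before the alpha-th success with success probability 1/(1+theta).\<close>
definition marg :: "int \<Rightarrow> nat \<Rightarrow> real \<Rightarrow> nat pmf" where
  "marg \<sigma> \<alpha> \<theta> =
     (if \<sigma> = -1 then binomial_pmf \<alpha> \<theta>
      else if \<sigma> = 0 then (if \<theta> = 0 then return_pmf 0 else poisson_pmf (real \<alpha> * \<theta>))
      else neg_binomial_pmf \<alpha> (1 / (1 + \<theta>)))"

definition mu :: "int \<Rightarrow> nat \<Rightarrow> real \<Rightarrow> (int ^ 'd \<Rightarrow> nat) measure" where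
  "mu \<sigma> \<alpha> \<theta> = PiM UNIV (\<lambda>_. measure_pmf (marg \<sigma> \<alpha> \<theta>))"

definition Theta :: "int \<Rightarrow> real set" where
  "Theta \<sigma> = (if \<sigma> = -1 then {0..1} else {0..})"

definition pairing :: "nat \<Rightarrow> ((real ^ 'd::finite) list \<Rightarrow> real) \<Rightarrow> nat \<Rightarrow> (int ^ 'd \<Rightarrow> nat) \<Rightarrow> real" where
  "pairing k G N \<eta> = (1 / real N ^ (k * CARD('d))) *
     (\<Sum>\<^sub>\<infinity>xs \<in> {xs. length xs = k}. G (map (scale_site N) xs) * fmom \<eta> xs)"

definition curly :: "nat \<Rightarrow> (int ^ 'd \<Rightarrow> nat) \<Rightarrow> (int ^ 'd) list \<Rightarrow> (int ^ 'd) list \<Rightarrow> real" where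
  "curly h \<eta> xs ys =
     (\<Sum>J | J \<subseteq> {0..<length ys} \<and> card J = h.
        fmom \<eta> (xs @ nths ys ({0..<length ys} - J)) *
        (\<Sum>i | i \<in> J \<rightarrow>\<^sub>E {0..<length xs} \<and> inj_on i J.
           \<Prod>j\<in>J. if ys ! j = xs ! (i j) then 1 else 0))"

definition pairing_tensor ::
  "nat \<Rightarrow> nat \<Rightarrow> nat \<Rightarrow> ((real ^ 'd::finite) list \<Rightarrow> real) \<Rightarrow> ((real ^ 'd) list \<Rightarrow> real)
    \<Rightarrow> nat \<Rightarrow> (int ^ 'd \<Rightarrow> nat) \<Rightarrow> real" where
  "pairing_tensor k l h G H N \<eta> = (1 / real N ^ ((k + l - h) * CARD('d))) *
     (\<Sum>\<^sub>\<infinity>xs \<in> {xs. length xs = k}. \<Sum>\<^sub>\<infinity>ys \<in> {ys. length ys = l}.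
        G (map (scale_site N) xs) * H (map (scale_site N) ys) * curly h \<eta> xs ys)"

end

(*
  A Schwartz function sampled on the lattice N^{-1} Z^d is absolutely summable, and the factorial
  moments [eta]_x have expectations bounded uniformly in x of fixed length, so expectations can be
  exchanged with the lattice sums on both sides. Under the product measure, E [eta]_x = theta^k pi(x)
  is a product over the entries of x of theta (alpha + sigma c), where c counts the earlier entries
  equal to the current one; this comes from the single-site factorial moments
  E[n (n-1) ... (n-c+1)] = theta^c alpha (alpha + sigma) ... (alpha + sigma (c-1)).
  The claim thus reduces, for each pair (x, y), to an identity between such products, proved by
  appending the entries of y to x one at a time: an entry w of y that equals a still available
  entries of x is either kept, contributing theta (alpha + sigma (a + c)), or contracted with one of
  them, contributing -sigma theta a in total; the sum theta (alpha + sigma c) is the factor that w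
  contributes when those a entries of x are absent.
*)

theory Submission
  imports Defs
begin

section \<open>Exchanging expectations and lattice sums\<close>

lemma infsum_eq_integral_count_space:
  fixes f :: "'a \<Rightarrow> real"
  shows "infsum f A = (\<integral>x. f x \<partial>count_space A)"
proof (cases "Infinite_Set_Sum.abs_summable_on f A")
  case True
  then show ?thesis using infsetsum_infsum[OF True] by (simp add: infsetsum_def)
next
  case False
  then have "\<not> f summable_on A"
    using summable_on_iff_abs_summable_on_real abs_summable_equivalent by blast
  with False show ?thesis
    by (simp add: abs_summable_on_def infsum_not_exists not_integrable_integral_eq)
qed

lemma integrable_count_space_bounded_mult:
  fixes g K :: "'a \<Rightarrow> real"
  assumes g: "integrable (count_space A) g" and K: "\<And>x. x \<in> A \<Longrightarrow> \<bar>K x\<bar> \<le> C"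
  shows "integrable (count_space A) (\<lambda>x. g x * K x)"
proof (rule Bochner_Integration.integrable_bound[of _ "\<lambda>x. C * g x"])
  show "integrable (count_space A) (\<lambda>x. C * g x)"
    using g by simp
  have "\<bar>g x * K x\<bar> \<le> \<bar>C * g x\<bar>" if "x \<in> A" for x
    using mult_left_mono[OF K[OF that], of "\<bar>g x\<bar>"] abs_ge_self[of C]
    by (simp add: abs_mult mult.commute) (meson abs_ge_zero mult_right_mono order_trans)
  then show "AE x in count_space A. norm (g x * K x) \<le> norm (C * g x)"
    by (simp add: AE_count_space)
qed simp

lemma expectation_weighted_sum:
  fixes g :: "'a \<Rightarrow> real" and X :: "'a \<Rightarrow> 'b \<Rightarrow> real"
  assumes M: "prob_space M" and A: "countable A" and g: "integrable (count_space A) g"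
    and X: "\<And>a. a \<in> A \<Longrightarrow> integrable M (X a)"
    and B: "\<And>a. a \<in> A \<Longrightarrow> (\<integral>x. \<bar>X a x\<bar> \<partial>M) \<le> B"
  shows "integrable M (\<lambda>x. \<integral>a. g a * X a x \<partial>count_space A)"
    and "(\<integral>x. (\<integral>a. g a * X a x \<partial>count_space A) \<partial>M) = (\<integral>a. g a * (\<integral>x. X a x \<partial>M) \<partial>count_space A)"
    and "(\<integral>x. \<bar>\<integral>a. g a * X a x \<partial>count_space A\<bar> \<partial>M) \<le> B * (\<integral>a. \<bar>g a\<bar> \<partial>count_space A)"
proof -
  interpret M: prob_space M by (rule M)
  interpret C: sigma_finite_measure "count_space A"
    by (rule sigma_finite_measure_count_space_countable[OF A])
  interpret P: pair_sigma_finite "count_space A" M ..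
  let ?f = "\<lambda>(a, x). g a * X a x"
  have abs_moment: "(\<integral>x. \<bar>g a * X a x\<bar> \<partial>M) = \<bar>g a\<bar> * (\<integral>x. \<bar>X a x\<bar> \<partial>M)" for a
    by (simp add: abs_mult)
  have meas: "?f \<in> borel_measurable (count_space A \<Otimes>\<^sub>M M)"
    by (rule measurable_pair_measure_countable1[OF A]) (use X in auto)
  have summable_abs: "integrable (count_space A) (\<lambda>a. \<bar>g a\<bar> * (\<integral>x. \<bar>X a x\<bar> \<partial>M))"
    by (rule integrable_count_space_bounded_mult[where C = B])
      (use g B in \<open>auto simp: integral_nonneg_AE\<close>)
  have I: "integrable (count_space A \<Otimes>\<^sub>M M) ?f"
    by (rule P.Fubini_integrable[OF meas])
      (use summable_abs X in \<open>auto simp: AE_count_space abs_moment\<close>)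
  show "integrable M (\<lambda>x. \<integral>a. g a * X a x \<partial>count_space A)"
    using P.integrable_snd[OF I] by simp
  have "(\<integral>x. (\<integral>a. g a * X a x \<partial>count_space A) \<partial>M) = integral\<^sup>L (count_space A \<Otimes>\<^sub>M M) ?f"
    using P.integral_snd[OF I] by simp
  also have "\<dots> = (\<integral>a. (\<integral>x. g a * X a x \<partial>M) \<partial>count_space A)"
    using P.integral_fst[OF I] by simp
  finally show "(\<integral>x. (\<integral>a. g a * X a x \<partial>count_space A) \<partial>M) = (\<integral>a. g a * (\<integral>x. X a x \<partial>M) \<partial>count_space A)"
    by simp
  have Iabs: "integrable (count_space A \<Otimes>\<^sub>M M) (\<lambda>(a, x). \<bar>g a * X a x\<bar>)"
    using integrable_abs[OF I] by (simp add: case_prod_beta')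
  have "(\<integral>x. \<bar>\<integral>a. g a * X a x \<partial>count_space A\<bar> \<partial>M) \<le> (\<integral>x. (\<integral>a. \<bar>g a * X a x\<bar> \<partial>count_space A) \<partial>M)"
    using P.integrable_snd[OF Iabs] P.integrable_snd[OF I]
    by (intro integral_mono) (auto intro: integral_abs_bound)
  also have "\<dots> = (\<integral>a. \<bar>g a\<bar> * (\<integral>x. \<bar>X a x\<bar> \<partial>M) \<partial>count_space A)"
    using P.integral_snd[OF Iabs] P.integral_fst[OF Iabs] by (simp add: abs_moment)
  also have "\<dots> \<le> (\<integral>a. \<bar>g a\<bar> * B \<partial>count_space A)"
    using summable_abs g B by (intro integral_mono) (auto intro: mult_left_mono)
  finally show "(\<integral>x. \<bar>\<integral>a. g a * X a x \<partial>count_space A\<bar> \<partial>M) \<le> B * (\<integral>a. \<bar>g a\<bar> \<partial>count_space A)"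
    by (simp add: mult.commute)
qed

lemma integral_count_space_double_sum:
  fixes g :: "'a \<Rightarrow> real" and b :: "'b \<Rightarrow> real" and K :: "'i \<Rightarrow> 'a \<Rightarrow> 'b \<Rightarrow> real"
  assumes g: "integrable (count_space A) g" and b: "integrable (count_space B) b"
    and K: "\<And>i x y. i \<in> I \<Longrightarrow> x \<in> A \<Longrightarrow> y \<in> B \<Longrightarrow> \<bar>K i x y\<bar> \<le> C i"
  shows "(\<integral>x. g x * (\<integral>y. b y * (\<Sum>i\<in>I. K i x y) \<partial>count_space B) \<partial>count_space A)
    = (\<Sum>i\<in>I. \<integral>x. g x * (\<integral>y. b y * K i x y \<partial>count_space B) \<partial>count_space A)"
proof -
  have inner: "integrable (count_space B) (\<lambda>y. b y * K i x y)" if "i \<in> I" "x \<in> A" for i x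
    using K that by (intro integrable_count_space_bounded_mult[OF b, where C = "C i"]) simp
  have "\<bar>\<integral>y. b y * K i x y \<partial>count_space B\<bar> \<le> C i * (\<integral>y. \<bar>b y\<bar> \<partial>count_space B)"
    if "i \<in> I" "x \<in> A" for i x
  proof -
    have "\<bar>\<integral>y. b y * K i x y \<partial>count_space B\<bar> \<le> (\<integral>y. \<bar>b y * K i x y\<bar> \<partial>count_space B)"
      by (rule integral_abs_bound)
    also have "\<dots> \<le> (\<integral>y. C i * \<bar>b y\<bar> \<partial>count_space B)"
      using integrable_abs[OF inner[OF that]] b K[OF that]
      by (intro integral_mono) (auto simp: abs_mult mult.commute[of "C i"] intro: mult_left_mono)
    finally show ?thesis
      by simp
  qed
  then have outer: "integrable (count_space A) (\<lambda>x. g x * (\<integral>y. b y * K i x y \<partial>count_space B))"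
    if "i \<in> I" for i
    using that by (intro integrable_count_space_bounded_mult[OF g, where C = "C i * (\<integral>y. \<bar>b y\<bar> \<partial>count_space B)"])
  have "(\<integral>x. g x * (\<integral>y. b y * (\<Sum>i\<in>I. K i x y) \<partial>count_space B) \<partial>count_space A)
      = (\<integral>x. (\<Sum>i\<in>I. g x * (\<integral>y. b y * K i x y \<partial>count_space B)) \<partial>count_space A)"
    using inner by (intro Bochner_Integration.integral_cong refl)
      (simp add: sum_distrib_left Bochner_Integration.integral_sum)
  also have "\<dots> = (\<Sum>i\<in>I. \<integral>x. g x * (\<integral>y. b y * K i x y \<partial>count_space B) \<partial>count_space A)"
    using outer by (rule Bochner_Integration.integral_sum)
  finally show ?thesis .
qed

lemma countable_lists_length: "countable {xs :: 'a::countable list. length xs = k}"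
  by (rule countable_subset[OF subset_UNIV]) simp

section \<open>Schwartz functions are summable on the rescaled lattice\<close>

lemma integrable_int_decay:
  fixes N :: real
  assumes N: "1 \<le> N"
  shows "integrable (count_space UNIV) (\<lambda>z::int. inverse ((1 + \<bar>real_of_int z\<bar> / N) ^ 2))"
proof -
  let ?w = "\<lambda>z::int. inverse ((1 + \<bar>real_of_int z\<bar> / N) ^ 2)"
  have dominated: "norm (?w (int n)) \<le> N\<^sup>2 * inverse (real (Suc n) ^ 2)" for n
  proof -
    have "(real (Suc n) / N) ^ 2 \<le> (1 + real n / N) ^ 2"
      using N by (intro power_mono) (simp_all add: field_simps)
    then have "?w (int n) \<le> inverse ((real (Suc n) / N) ^ 2)"
      using N by (intro le_imp_inverse_le) simp_all
    also have "\<dots> = N\<^sup>2 * inverse (real (Suc n) ^ 2)"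
      by (simp add: power_divide field_simps)
    finally show ?thesis
      using N by (simp add: add_pos_nonneg)
  qed
  have majorant: "summable (\<lambda>n. N\<^sup>2 * inverse (real (Suc n) ^ 2))"
    using summable_Suc_iff[of "\<lambda>n. inverse (real n ^ 2)"] inverse_power_summable[of 2]
    by (intro summable_mult) simp
  have "summable (\<lambda>n. norm (?w (int n)))"
    by (rule summable_comparison_test'[OF majorant]) (use dominated in simp)
  then have "integrable (count_space UNIV) (\<lambda>n. ?w (int n))"
    by (simp add: abs_summable_on_nat_iff' flip: abs_summable_on_def)
  then have "integrable (count_space (range int \<union> range (\<lambda>n. - int n))) ?w"
    unfolding abs_summable_on_def[symmetric]
    by (intro abs_summable_on_union abs_summable_on_reindex) simp_all
  moreover have "range int \<union> range (\<lambda>n. - int n) = UNIV"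
  proof (intro set_eqI iffI)
    fix z :: int
    show "z \<in> range int \<union> range (\<lambda>n. - int n)"
      by (cases "0 \<le> z") (auto intro: range_eqI[of _ _ "nat z"] range_eqI[of _ _ "nat (- z)"])
  qed simp
  ultimately show ?thesis
    by simp
qed

lemma integrable_count_space_vec_prod:
  fixes f :: "'a \<Rightarrow> real"
  assumes "countable (UNIV :: 'a set)" and "integrable (count_space UNIV) f"
  shows "integrable (count_space UNIV) (\<lambda>v :: 'a ^ 'd::finite. \<Prod>i\<in>UNIV. f (v $ i))"
proof -
  have "integrable (count_space (PiE UNIV (\<lambda>_. UNIV))) (\<lambda>g :: 'd \<Rightarrow> 'a. \<Prod>i\<in>UNIV. f (g i))"
    using abs_summable_on_prod_PiE[of "UNIV :: 'd set" "\<lambda>_. UNIV" "\<lambda>_. f"] assms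
    by (simp add: abs_summable_on_def)
  moreover have bij: "bij_betw vec_nth (UNIV :: ('a ^ 'd) set) (PiE UNIV (\<lambda>_. UNIV))"
    by (rule bij_betwI[where g = vec_lambda]) (simp_all add: vec_lambda_inverse)
  ultimately show ?thesis
    using abs_summable_on_reindex_bij_betw[OF bij, of "\<lambda>g. \<Prod>i\<in>UNIV. f (g i)"]
    by (simp add: abs_summable_on_def)
qed

lemma integrable_count_space_list_prod:
  fixes f :: "'a \<Rightarrow> real"
  assumes "countable (UNIV :: 'a set)" and "integrable (count_space UNIV) f"
  shows "integrable (count_space {xs. length xs = k}) (\<lambda>xs. \<Prod>j<k. f (xs ! j))"
proof -
  let ?list = "\<lambda>g :: nat \<Rightarrow> 'a. map g [0..<k]"
  have summable: "integrable (count_space (PiE {..<k} (\<lambda>_. UNIV))) (\<lambda>g :: nat \<Rightarrow> 'a. \<Prod>j<k. f (g j))"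
    using abs_summable_on_prod_PiE[of "{..<k}" "\<lambda>_. UNIV" "\<lambda>_. f"] assms
    by (simp add: abs_summable_on_def)
  have reindex: "(\<Prod>j<k. f (?list g ! j)) = (\<Prod>j<k. f (g j))" for g
    by (rule prod.cong) simp_all
  have "integrable (count_space (PiE {..<k} (\<lambda>_. UNIV))) (\<lambda>g. \<Prod>j<k. f (?list g ! j))"
    using summable by (simp only: reindex)
  then have "integrable (count_space (?list ` PiE {..<k} (\<lambda>_. UNIV))) (\<lambda>xs. \<Prod>j<k. f (xs ! j))"
    unfolding abs_summable_on_def[symmetric] by (rule abs_summable_on_reindex)
  moreover have "?list ` PiE {..<k} (\<lambda>_. UNIV) = {xs. length xs = k}"
  proof (intro equalityI subsetI)
    fix xs :: "'a list" assume "xs \<in> {xs. length xs = k}"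
    then have "xs = ?list (\<lambda>j. if j < k then xs ! j else undefined)"
      by (intro nth_equalityI) simp_all
    moreover have "(\<lambda>j. if j < k then xs ! j else undefined) \<in> PiE {..<k} (\<lambda>_. UNIV)"
      by (simp add: PiE_iff extensional_def)
    ultimately show "xs \<in> ?list ` PiE {..<k} (\<lambda>_. UNIV)"
      by (rule image_eqI)
  next
    fix xs assume "xs \<in> ?list ` PiE {..<k} (\<lambda>_. UNIV)"
    then show "xs \<in> {xs. length xs = k}"
      by (elim imageE) simp
  qed
  ultimately show ?thesis
    by simp
qed

lemma norm_nth_le_list_norm:
  assumes "j < length v"
  shows "norm (v ! j) \<le> list_norm v"
proof -
  have "(norm (v ! j))\<^sup>2 \<le> (\<Sum>i<length v. (norm (v ! i))\<^sup>2)"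
    using assms by (intro member_le_sum) auto
  then show ?thesis
    unfolding list_norm_def by (metis real_sqrt_abs real_sqrt_le_mono abs_norm_cancel)
qed

lemma lattice_weight_le_list_norm:
  assumes N: "1 \<le> N"
  shows "(\<Prod>j<length xs. \<Prod>i\<in>UNIV. (1 + \<bar>real_of_int (xs ! j $ i)\<bar> / real N) ^ 2)
    \<le> (1 + list_norm (map (scale_site N) xs :: (real ^ 'd::finite) list)) ^ (2 * (length xs * CARD('d)))"
proof -
  let ?v = "map (scale_site N) xs :: (real ^ 'd) list"
  have "\<bar>real_of_int (xs ! j $ i)\<bar> / real N \<le> list_norm ?v" if "j < length xs" for j i
  proof -
    have "\<bar>real_of_int (xs ! j $ i)\<bar> / real N = \<bar>?v ! j $ i\<bar>"
      using that N by (simp add: scale_site_def)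
    also have "\<dots> \<le> list_norm ?v"
      using component_le_norm_cart norm_nth_le_list_norm[of j ?v] that by (metis length_map order_trans)
    finally show ?thesis .
  qed
  then have "(\<Prod>j<length xs. \<Prod>i\<in>UNIV. (1 + \<bar>real_of_int (xs ! j $ i)\<bar> / real N) ^ 2)
      \<le> (\<Prod>j<length xs. \<Prod>i\<in>(UNIV::'d set). (1 + list_norm ?v) ^ 2)"
    by (intro prod_mono conjI power_mono prod_nonneg) (auto simp: add_nonneg_nonneg)
  also have "\<dots> = (1 + list_norm ?v) ^ (2 * (length xs * CARD('d)))"
    by (simp add: power_mult[symmetric] mult_ac)
  finally show ?thesis .
qed

lemma schwartz_lattice_integrable:
  fixes G :: "(real ^ 'd::finite) list \<Rightarrow> real"
  assumes N: "1 \<le> N" and G: "schwartz k G"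
  shows "integrable (count_space {xs :: (int ^ 'd) list. length xs = k}) (\<lambda>xs. G (map (scale_site N) xs))"
proof -
  let ?u = "\<lambda>z::int. 1 + \<bar>real_of_int z\<bar> / real N"
  let ?Q = "\<lambda>xs :: (int ^ 'd) list. \<Prod>j<k. \<Prod>i\<in>UNIV. ?u (xs ! j $ i) ^ 2"
  obtain C where C: "\<And>xs. length xs = k \<Longrightarrow> (1 + list_norm xs) ^ (2 * (k * CARD('d))) * \<bar>G xs\<bar> \<le> C"
    using G iter_partial.base unfolding schwartz_def by blast
  have "integrable (count_space UNIV) (\<lambda>v :: int ^ 'd. \<Prod>i\<in>UNIV. inverse (?u (v $ i) ^ 2))"
    using integrable_int_decay[of "real N"] N by (intro integrable_count_space_vec_prod) simp_all
  then have "integrable (count_space {xs :: (int ^ 'd) list. length xs = k})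
      (\<lambda>xs. \<Prod>j<k. \<Prod>i\<in>UNIV. inverse (?u (xs ! j $ i) ^ 2))"
    by (intro integrable_count_space_list_prod) simp_all
  moreover have "inverse (?Q xs) = (\<Prod>j<k. \<Prod>i\<in>UNIV. inverse (?u (xs ! j $ i) ^ 2))" for xs
    by (simp only: prod_inversef[unfolded comp_def])
  ultimately have "integrable (count_space {xs :: (int ^ 'd) list. length xs = k}) (\<lambda>xs. inverse (?Q xs))"
    by simp
  then have W: "integrable (count_space {xs :: (int ^ 'd) list. length xs = k}) (\<lambda>xs. C * inverse (?Q xs))"
    by simp
  have "\<bar>G (map (scale_site N) xs)\<bar> \<le> C * inverse (?Q xs)" if xs: "length xs = k" for xs :: "(int ^ 'd) list"
  proof -
    have "0 < ?Q xs"
      using N by (intro prod_pos zero_less_power) (auto simp: add_pos_nonneg)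
    moreover have "\<bar>G (map (scale_site N) xs)\<bar> * ?Q xs \<le> C"
      using mult_left_mono[OF lattice_weight_le_list_norm[OF N, of xs], of "\<bar>G (map (scale_site N) xs)\<bar>"]
        C[of "map (scale_site N) xs"] xs
      by (simp add: mult.commute)
    ultimately show ?thesis
      by (simp add: pos_le_divide_eq flip: divide_inverse)
  qed
  then show ?thesis
    by (intro Bochner_Integration.integrable_bound[OF W])
      (auto simp: AE_count_space intro: order_trans[OF _ abs_ge_self])
qed

section \<open>Occurrence products\<close>

fun occ_prod :: "('a \<Rightarrow> nat \<Rightarrow> real) \<Rightarrow> 'a multiset \<Rightarrow> 'a list \<Rightarrow> real" where
  "occ_prod F S [] = 1"
| "occ_prod F S (w # ys) = F w (count S w) * occ_prod F (add_mset w S) ys"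

lemma occ_prod_append: "occ_prod F S (xs @ ys) = occ_prod F S xs * occ_prod F (S + mset xs) ys"
  by (induction xs arbitrary: S) simp_all

lemma occ_prod_snoc: "occ_prod F S (xs @ [w]) = occ_prod F S xs * F w (count (S + mset xs) w)"
  by (simp add: occ_prod_append)

lemma count_mset_eq_card: "count (mset xs) w = card {j. j < length xs \<and> xs ! j = w}"
proof -
  have "count (mset xs) w = length (filter (HOL.eq w) xs)"
    by (metis length_replicate replicate_count_mset_eq_filter_eq)
  then show ?thesis
    by (simp add: length_filter_conv_card eq_commute)
qed

lemma occ_prod_empty:
  "occ_prod F {#} xs = (\<Prod>m<length xs. F (xs ! m) (card {j. j < m \<and> xs ! j = xs ! m}))"
proof (induction xs rule: rev_induct)
  case (snoc w xs)
  have "{j. j < m \<and> (xs @ [w]) ! j = (xs @ [w]) ! m} = {j. j < m \<and> xs ! j = xs ! m}"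
    if "m < length xs" for m
    using that by (auto simp: nth_append)
  moreover have "{j. j < length xs \<and> (xs @ [w]) ! j = w} = {j. j < length xs \<and> xs ! j = w}"
    by (auto simp: nth_append)
  ultimately show ?case
    by (simp add: occ_prod_snoc snoc.IH count_mset_eq_card nth_append)
qed simp

lemma fmom_eq_occ_prod: "fmom \<eta> xs = occ_prod (\<lambda>z c. real (\<eta> z) - real c) {#} xs"
  by (simp add: fmom_def occ_prod_empty)

lemma occ_prod_eq_prod_count:
  assumes "\<And>z. \<phi> z 0 = 1" and "\<And>z c. \<phi> z (Suc c) = \<phi> z c * F z c"
  shows "occ_prod F {#} xs = (\<Prod>z\<in>set xs. \<phi> z (count (mset xs) z))"
proof -
  have "occ_prod F {#} xs = (\<Prod>z\<in>Z. \<phi> z (count (mset xs) z))" if "finite Z" "set xs \<subseteq> Z" for Z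
    using that(2)
  proof (induction xs rule: rev_induct)
    case (snoc w xs)
    then have w: "w \<in> Z" and IH: "occ_prod F {#} xs = (\<Prod>z\<in>Z. \<phi> z (count (mset xs) z))"
      by simp_all
    have other: "(\<Prod>z\<in>Z - {w}. \<phi> z (count (mset (xs @ [w])) z)) = (\<Prod>z\<in>Z - {w}. \<phi> z (count (mset xs) z))"
      by (rule prod.cong) auto
    have "(\<Prod>z\<in>Z. \<phi> z (count (mset (xs @ [w])) z))
        = \<phi> w (Suc (count (mset xs) w)) * (\<Prod>z\<in>Z - {w}. \<phi> z (count (mset xs) z))"
      using prod.remove[OF \<open>finite Z\<close> w, of "\<lambda>z. \<phi> z (count (mset (xs @ [w])) z)"] other by simp
    also have "\<dots> = (\<Prod>z\<in>Z. \<phi> z (count (mset xs) z)) * F w (count (mset xs) w)"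
      using prod.remove[OF \<open>finite Z\<close> w, of "\<lambda>z. \<phi> z (count (mset xs) z)"] assms(2) by simp
    finally show ?case
      by (simp add: occ_prod_snoc IH)
  qed (simp add: assms(1))
  then show ?thesis
    by simp
qed

lemma abs_occ_prod_le:
  assumes "\<And>w c. c < size S + length xs \<Longrightarrow> \<bar>F w c\<bar> \<le> B"
  shows "\<bar>occ_prod F S xs\<bar> \<le> B ^ length xs"
  using assms
proof (induction xs arbitrary: S)
  case (Cons w xs)
  have "count S w < size S + length (w # xs)"
    using count_le_size[of S w] by simp
  then have Fw: "\<bar>F w (count S w)\<bar> \<le> B"
    by (rule Cons.prems)
  have "\<bar>occ_prod F (add_mset w S) xs\<bar> \<le> B ^ length xs"
    using Cons.prems by (intro Cons.IH) simp
  then show ?case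
    using Fw by (simp add: abs_mult mult_mono')
qed simp

section \<open>Contractions\<close>

definition contractions :: "'a list \<Rightarrow> nat set \<Rightarrow> nat set \<Rightarrow> 'a list \<Rightarrow> real" where
  "contractions X A J ys =
     (\<Sum>i | i \<in> J \<rightarrow>\<^sub>E A \<and> inj_on i J. \<Prod>j\<in>J. if ys ! j = X ! (i j) then 1 else 0)"

lemma contractions_empty: "contractions X A {} ys = 1"
proof -
  have "{i. i \<in> {} \<rightarrow>\<^sub>E A \<and> inj_on i {}} = {\<lambda>_. undefined}"
    by auto
  then show ?thesis
    by (simp add: contractions_def)
qed

lemma contractions_nonneg: "0 \<le> contractions X A J ys"
  unfolding contractions_def by (intro sum_nonneg prod_nonneg) auto

lemma contractions_le:
  assumes "finite A" and "finite J"
  shows "contractions X A J ys \<le> real (card A) ^ card J"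
proof -
  have "contractions X A J ys \<le> (\<Sum>i | i \<in> J \<rightarrow>\<^sub>E A \<and> inj_on i J. 1)"
    unfolding contractions_def by (intro sum_mono prod_le_1) auto
  also have "\<dots> = real (card {i. i \<in> J \<rightarrow>\<^sub>E A \<and> inj_on i J})"
    by simp
  also have "card {i. i \<in> J \<rightarrow>\<^sub>E A \<and> inj_on i J} \<le> card (J \<rightarrow>\<^sub>E A)"
    using assms by (intro card_mono finite_PiE) auto
  finally show ?thesis
    using assms by (simp add: card_PiE)
qed

lemma contractions_append:
  assumes "A \<subseteq> {..<length X}"
  shows "contractions (X @ R) A J ys = contractions X A J ys"
  unfolding contractions_def
  by (intro sum.cong prod.cong refl) (use assms in \<open>auto simp: nth_append PiE_iff\<close>)

lemma contractions_Cons_Suc_image: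
  assumes "finite J"
  shows "contractions X A (Suc ` J) (w # ys) = contractions X A J ys"
  unfolding contractions_def
proof (rule sum.reindex_bij_witness[where j = "\<lambda>i j. if j \<in> J then i (Suc j) else undefined"
      and i = "\<lambda>i j. if j \<in> Suc ` J then i (j - 1) else undefined"])
  fix i assume i: "i \<in> {i. i \<in> Suc ` J \<rightarrow>\<^sub>E A \<and> inj_on i (Suc ` J)}"
  then show "(\<lambda>j. if j \<in> Suc ` J then (if j - 1 \<in> J then i (Suc (j - 1)) else undefined) else undefined) = i"
    by (auto simp: fun_eq_iff PiE_def extensional_def)
  have "(\<lambda>j. if j \<in> J then i (Suc j) else undefined) \<in> J \<rightarrow>\<^sub>E A"
    using i by (auto simp: PiE_def extensional_def)
  moreover have "inj_on (\<lambda>j. if j \<in> J then i (Suc j) else undefined) J"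
    using i by (auto simp: inj_on_def)
  ultimately show "(\<lambda>j. if j \<in> J then i (Suc j) else undefined) \<in> {i. i \<in> J \<rightarrow>\<^sub>E A \<and> inj_on i J}"
    by simp
  show "(\<Prod>j\<in>J. if ys ! j = X ! (if j \<in> J then i (Suc j) else undefined) then 1 else 0)
      = (\<Prod>j\<in>Suc ` J. if (w # ys) ! j = X ! (i j) then 1 else 0)"
    by (simp add: prod.reindex)
next
  fix i assume i: "i \<in> {i. i \<in> J \<rightarrow>\<^sub>E A \<and> inj_on i J}"
  then show "(\<lambda>j. if j \<in> J then (if Suc j \<in> Suc ` J then i (Suc j - 1) else undefined) else undefined) = i"
    by (auto simp: fun_eq_iff PiE_def extensional_def)
  have "(\<lambda>j. if j \<in> Suc ` J then i (j - 1) else undefined) \<in> Suc ` J \<rightarrow>\<^sub>E A"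
    using i by (auto simp: PiE_def extensional_def)
  moreover have "inj_on (\<lambda>j. if j \<in> Suc ` J then i (j - 1) else undefined) (Suc ` J)"
    using i by (auto simp: inj_on_def)
  ultimately show "(\<lambda>j. if j \<in> Suc ` J then i (j - 1) else undefined) \<in> {i. i \<in> Suc ` J \<rightarrow>\<^sub>E A \<and> inj_on i (Suc ` J)}"
    by simp
qed

lemma contractions_Cons_insert_0:
  assumes J: "finite J" and A: "finite A"
  shows "contractions X A (insert 0 (Suc ` J)) (w # ys)
    = (\<Sum>p\<in>A. (if w = X ! p then 1 else 0) * contractions X (A - {p}) J ys)"
proof -
  let ?I = "\<lambda>p. {i. i \<in> J \<rightarrow>\<^sub>E (A - {p}) \<and> inj_on i J}"
  let ?f = "\<lambda>(p, i). (if w = X ! p then 1 else 0) * (\<Prod>j\<in>J. if ys ! j = X ! (i j) then 1 else (0::real))"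
  let ?split = "\<lambda>i. (i 0, \<lambda>j. if j \<in> J then i (Suc j) else undefined)"
  let ?join = "\<lambda>(p, i) j. if j = 0 then p else if j \<in> Suc ` J then i (j - 1) else undefined"
  have "finite (?I p)" for p
    by (rule finite_subset[of _ "J \<rightarrow>\<^sub>E (A - {p})"]) (use J A in \<open>auto intro!: finite_PiE\<close>)
  then have "(\<Sum>p\<in>A. (if w = X ! p then 1 else 0) * contractions X (A - {p}) J ys) = (\<Sum>z\<in>Sigma A ?I. ?f z)"
    by (simp add: contractions_def sum_distrib_left sum.Sigma[OF A])
  also have "\<dots> = contractions X A (insert 0 (Suc ` J)) (w # ys)"
    unfolding contractions_def
  proof (rule sum.reindex_bij_witness[where i = ?split and j = ?join])
    fix i assume i: "i \<in> {i. i \<in> insert 0 (Suc ` J) \<rightarrow>\<^sub>E A \<and> inj_on i (insert 0 (Suc ` J))}"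
    then show "?join (?split i) = i"
      by (auto simp: fun_eq_iff PiE_def extensional_def)
    have "i (Suc j) \<noteq> i 0" if "j \<in> J" for j
      using i that unfolding inj_on_def by blast
    then have "(\<lambda>j. if j \<in> J then i (Suc j) else undefined) \<in> J \<rightarrow>\<^sub>E (A - {i 0})"
      using i by (auto simp: PiE_def extensional_def)
    moreover have "inj_on (\<lambda>j. if j \<in> J then i (Suc j) else undefined) J"
      using i by (auto simp: inj_on_def)
    ultimately show "?split i \<in> Sigma A ?I"
      using i by auto
  next
    fix z assume z: "z \<in> Sigma A ?I"
    then obtain p i where zpi: "z = (p, i)" and p: "p \<in> A" and i: "i \<in> J \<rightarrow>\<^sub>E (A - {p})" "inj_on i J"
      by auto
    show "?split (?join z) = z"
      using zpi i by (auto simp: fun_eq_iff PiE_def extensional_def)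
    have "?join z \<in> insert 0 (Suc ` J) \<rightarrow>\<^sub>E A"
      using zpi i p by (auto simp: PiE_def extensional_def)
    moreover have "inj_on (?join z) (insert 0 (Suc ` J))"
      using zpi i unfolding inj_on_def by (auto simp: PiE_def)
    ultimately show "?join z \<in> {i. i \<in> insert 0 (Suc ` J) \<rightarrow>\<^sub>E A \<and> inj_on i (insert 0 (Suc ` J))}"
      by simp
    show "(\<Prod>j\<in>insert 0 (Suc ` J). if (w # ys) ! j = X ! (?join z j) then 1 else 0) = ?f z"
      using zpi J by (simp add: prod.reindex)
  qed
  finally show ?thesis ..
qed

definition entries_outside :: "'a list \<Rightarrow> nat set \<Rightarrow> 'a multiset" where
  "entries_outside X A = image_mset (nth X) (mset_set ({..<length X} - A))"

lemma entries_outside_all [simp]: "entries_outside X {..<length X} = {#}"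
  by (simp add: entries_outside_def)

lemma entries_outside_snoc:
  assumes "A \<subseteq> {..<length X}"
  shows "entries_outside (X @ [w]) A = add_mset w (entries_outside X A)"
proof -
  have "{..<length (X @ [w])} - A = insert (length X) ({..<length X} - A)"
    using assms by auto
  moreover have "image_mset (nth (X @ [w])) (mset_set ({..<length X} - A)) = entries_outside X A"
    unfolding entries_outside_def by (intro image_mset_cong) (auto simp: nth_append)
  ultimately show ?thesis
    by (simp add: entries_outside_def)
qed

lemma entries_outside_remove:
  assumes "A \<subseteq> {..<length X}" and "p \<in> A"
  shows "entries_outside X (A - {p}) = add_mset (X ! p) (entries_outside X A)"
proof -
  have "{..<length X} - (A - {p}) = insert p ({..<length X} - A)"
    using assms by auto
  then show ?thesis
    using assms by (simp add: entries_outside_def)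
qed

lemma mset_eq_entries_inside_plus_outside:
  assumes "A \<subseteq> {..<length X}"
  shows "mset X = image_mset (nth X) (mset_set A) + entries_outside X A"
proof -
  have "mset X = image_mset (nth X) (mset_set {..<length X})"
    by (metis map_nth mset_map mset_upt atLeast0LessThan)
  also have "{..<length X} = A \<union> ({..<length X} - A)"
    using assms by auto
  also have "mset_set \<dots> = mset_set A + mset_set ({..<length X} - A)"
    using finite_subset[OF assms] by (intro mset_set_Union) auto
  finally show ?thesis
    by (simp add: entries_outside_def)
qed

lemma sum_indicator_eq_count_image_mset:
  assumes "finite A"
  shows "(\<Sum>p\<in>A. if w = X ! p then 1 else 0 :: real) = real (count (image_mset (nth X) (mset_set A)) w)"
  using assms by (simp add: count_image_mset sum.If_cases Int_commute vimage_def eq_commute)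

lemma sum_Pow_lessThan_Suc:
  "(\<Sum>J\<in>Pow {..<Suc n}. g J) = (\<Sum>J\<in>Pow {..<n}. g (Suc ` J)) + (\<Sum>J\<in>Pow {..<n}. g (insert 0 (Suc ` J)))"
proof -
  have inj: "inj_on (insert 0) (Pow (Suc ` {..<n}))"
    unfolding inj_on_def by (metis PowD image_iff insert_ident nat.distinct(1) subsetD)
  have "Pow {..<Suc n} = Pow (Suc ` {..<n}) \<union> insert 0 ` Pow (Suc ` {..<n})"
    by (simp add: lessThan_Suc_eq_insert_0 Pow_insert)
  then have "(\<Sum>J\<in>Pow {..<Suc n}. g J) = (\<Sum>J\<in>Pow (Suc ` {..<n}). g J) + (\<Sum>J\<in>insert 0 ` Pow (Suc ` {..<n}). g J)"
    by (simp add: sum.union_disjoint) (rule sum.union_disjoint; auto)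
  also have "(\<Sum>J\<in>insert 0 ` Pow (Suc ` {..<n}). g J) = (\<Sum>J\<in>Pow (Suc ` {..<n}). g (insert 0 J))"
    by (rule sum.reindex[OF inj, unfolded comp_def])
  also have "Pow (Suc ` {..<n}) = image Suc ` Pow {..<n}"
    by (simp add: image_Pow_surj)
  finally show ?thesis
    by (simp add: sum.reindex[OF inj_on_image_Pow])
qed

text \<open>In \<open>contraction_sum F s X A ys\<close>, the positions of \<open>X\<close> in \<open>A\<close> are those still available for
  contraction.\<close>

definition contraction_sum :: "('a \<Rightarrow> nat \<Rightarrow> real) \<Rightarrow> real \<Rightarrow> 'a list \<Rightarrow> nat set \<Rightarrow> 'a list \<Rightarrow> real" where
  "contraction_sum F s X A ys = (\<Sum>J\<in>Pow {..<length ys}.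
     (- s) ^ card J * occ_prod F {#} (X @ nths ys ({..<length ys} - J)) * contractions X A J ys)"

text \<open>Split according to whether the first entry of \<open>ys\<close> is kept or contracted.\<close>

lemma contraction_sum_Cons:
  assumes A: "A \<subseteq> {..<length X}"
  shows "contraction_sum F s X A (w # ys) = contraction_sum F s (X @ [w]) A ys
    - s * (\<Sum>p\<in>A. (if w = X ! p then 1 else 0) * contraction_sum F s X (A - {p}) ys)"
proof -
  let ?n = "length ys"
  let ?g = "\<lambda>J. (- s) ^ card J * occ_prod F {#} (X @ nths (w # ys) ({..<Suc ?n} - J)) * contractions X A J (w # ys)"
  have finA: "finite A"
    using A finite_subset by blast
  have kept: "?g (Suc ` J) = (- s) ^ card J * occ_prod F {#} ((X @ [w]) @ nths ys ({..<?n} - J)) * contractions (X @ [w]) A J ys"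
    if "J \<in> Pow {..<?n}" for J
  proof -
    have "{j. Suc j \<in> {..<Suc ?n} - Suc ` J} = {..<?n} - J"
      by auto
    then have "nths (w # ys) ({..<Suc ?n} - Suc ` J) = w # nths ys ({..<?n} - J)"
      by (simp add: nths_Cons)
    moreover have "finite J"
      using that finite_subset by blast
    ultimately show ?thesis
      using A by (simp add: card_image contractions_Cons_Suc_image contractions_append)
  qed
  have contracted: "?g (insert 0 (Suc ` J)) = - s * (\<Sum>p\<in>A. (if w = X ! p then 1 else 0) *
      ((- s) ^ card J * occ_prod F {#} (X @ nths ys ({..<?n} - J)) * contractions X (A - {p}) J ys))"
    if "J \<in> Pow {..<?n}" for J
  proof -
    have "{j. Suc j \<in> {..<Suc ?n} - insert 0 (Suc ` J)} = {..<?n} - J"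
      by auto
    then have "nths (w # ys) ({..<Suc ?n} - insert 0 (Suc ` J)) = nths ys ({..<?n} - J)"
      by (simp add: nths_Cons)
    moreover have "finite J"
      using that finite_subset by blast
    ultimately show ?thesis
      using contractions_Cons_insert_0[OF _ finA, of J X w ys]
      by (simp add: card_image sum_distrib_left mult_ac)
  qed
  have "contraction_sum F s X A (w # ys) = (\<Sum>J\<in>Pow {..<?n}. ?g (Suc ` J)) + (\<Sum>J\<in>Pow {..<?n}. ?g (insert 0 (Suc ` J)))"
    unfolding contraction_sum_def by (simp add: sum_Pow_lessThan_Suc)
  also have "\<dots> = contraction_sum F s (X @ [w]) A ys
      - s * (\<Sum>p\<in>A. (if w = X ! p then 1 else 0) * contraction_sum F s X (A - {p}) ys)"
    unfolding contraction_sum_def using kept contracted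
    by (simp add: sum_distrib_left sum.swap[of _ A] sum_negf)
  finally show ?thesis .
qed

lemma contraction_sum_eq:
  assumes affine: "\<And>w a c. F w (a + c) = F w c + s * real a"
    and "A \<subseteq> {..<length X}"
  shows "contraction_sum F s X A ys = occ_prod F {#} X * occ_prod F (entries_outside X A) ys"
  using assms(2)
proof (induction ys arbitrary: X A)
  case Nil
  then show ?case
    by (simp add: contraction_sum_def contractions_empty)
next
  case (Cons w ys)
  let ?U = "entries_outside X A"
  let ?a = "count (image_mset (nth X) (mset_set A)) w"
  let ?rest = "occ_prod F {#} X * occ_prod F (add_mset w ?U) ys"
  have finA: "finite A"
    using Cons.prems finite_subset by blast
  have count_w: "count (mset X) w = ?a + count ?U w"
    by (simp add: mset_eq_entries_inside_plus_outside[OF Cons.prems])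
  have "A \<subseteq> {..<length (X @ [w])}"
    using Cons.prems by auto
  then have kept: "contraction_sum F s (X @ [w]) A ys = F w (?a + count ?U w) * ?rest"
    using Cons.IH Cons.prems count_w by (simp add: occ_prod_snoc entries_outside_snoc mult_ac)
  have "(if w = X ! p then 1 else 0) * contraction_sum F s X (A - {p}) ys = (if w = X ! p then 1 else 0) * ?rest"
    if "p \<in> A" for p
    using Cons.IH[where X = X and A = "A - {p}"] Cons.prems that by (auto simp: entries_outside_remove)
  then have "(\<Sum>p\<in>A. (if w = X ! p then 1 else 0) * contraction_sum F s X (A - {p}) ys)
      = (\<Sum>p\<in>A. if w = X ! p then 1 else 0) * ?rest"
    unfolding sum_distrib_right by (rule sum.cong[OF refl])
  then have contracted: "(\<Sum>p\<in>A. (if w = X ! p then 1 else 0) * contraction_sum F s X (A - {p}) ys) = ?a * ?rest"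
    by (simp only: sum_indicator_eq_count_image_mset[OF finA])
  have "contraction_sum F s X A (w # ys) = F w (?a + count ?U w) * ?rest - s * (?a * ?rest)"
    by (simp only: contraction_sum_Cons[OF Cons.prems] kept contracted)
  also have "\<dots> = (F w (?a + count ?U w) - s * ?a) * ?rest"
    by (simp add: algebra_simps)
  also have "\<dots> = occ_prod F {#} X * occ_prod F ?U (w # ys)"
    using affine[of w ?a "count ?U w"] by simp
  finally show ?case .
qed

section \<open>Factorial moments of the single-site laws\<close>

definition falling_fact :: "nat \<Rightarrow> nat \<Rightarrow> real" where
  "falling_fact c n = (\<Prod>j<c. real n - real j)"

lemma falling_fact_0 [simp]: "falling_fact 0 n = 1"
  by (simp add: falling_fact_def)

lemma falling_fact_Suc: "falling_fact (Suc c) n = falling_fact c n * (real n - real c)"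
  by (simp add: falling_fact_def)

lemma falling_fact_eq_0: "n < c \<Longrightarrow> falling_fact c n = 0"
  unfolding falling_fact_def by (intro prod_zero) (auto intro!: bexI[of _ n])

lemma falling_fact_nonneg: "0 \<le> falling_fact c n"
proof (cases "n < c")
  case False
  then show ?thesis
    unfolding falling_fact_def by (intro prod_nonneg) auto
qed (simp add: falling_fact_eq_0)

lemma falling_fact_add: "falling_fact c (m + c) = fact (m + c) / fact m"
proof (induction c)
  case (Suc c)
  have "falling_fact (Suc c) (m + Suc c) = real (m + Suc c) * falling_fact c (m + c)"
    unfolding falling_fact_def prod.lessThan_Suc_shift by simp
  then show ?case
    by (simp add: Suc.IH)
qed simp

lemma pmf_nat_sums_1: "pmf (P :: nat pmf) sums 1"
proof -
  have "integrable (measure_pmf P) (\<lambda>_. 1::real)"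
    by simp
  then have I: "integrable (count_space UNIV) (pmf P)"
    unfolding measure_pmf_eq_density by (subst (asm) integrable_density) auto
  have "(\<integral>x. 1 \<partial>measure_pmf P) = (1::real)"
    by simp
  then have "integral\<^sup>L (count_space UNIV) (pmf P) = 1"
    unfolding measure_pmf_eq_density by (subst (asm) integral_density) auto
  with sums_integral_count_space_nat[OF I] show ?thesis
    by simp
qed

lemma falling_fact_moment_shift:
  fixes P Q :: "nat pmf"
  assumes shift: "\<And>m. pmf P (m + c) * falling_fact c (m + c) = K * pmf Q m"
  shows "integrable (measure_pmf P) (falling_fact c)"
    and "(\<integral>n. falling_fact c n \<partial>measure_pmf P) = K"
proof -
  define h where "h n = pmf P n * falling_fact c n" for n
  have "(\<lambda>m. h (m + c)) sums K"
    using sums_mult[OF pmf_nat_sums_1[of Q], of K] by (simp add: h_def shift)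
  then have sums: "h sums K"
    using sums_zero_iff_shift[of c h K] by (simp add: falling_fact_eq_0 h_def[abs_def])
  moreover have "norm (h n) = h n" for n
    by (simp add: h_def falling_fact_nonneg)
  ultimately have I: "integrable (count_space UNIV) h"
    by (simp add: integrable_count_space_nat_iff sums_iff)
  show "integrable (measure_pmf P) (falling_fact c)"
    unfolding measure_pmf_eq_density using I unfolding h_def by (subst integrable_density) auto
  have "integral\<^sup>L (count_space UNIV) h = K"
    using integral_count_space_nat[OF I] sums by (simp add: sums_iff)
  then show "(\<integral>n. falling_fact c n \<partial>measure_pmf P) = K"
    unfolding measure_pmf_eq_density h_def by (subst integral_density) auto
qed

definition marg_moment :: "int \<Rightarrow> nat \<Rightarrow> real \<Rightarrow> nat \<Rightarrow> real" where
  "marg_moment \<sigma> \<alpha> \<theta> c = \<theta> ^ c * (\<Prod>j<c. real \<alpha> + of_int \<sigma> * real j)"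

lemma falling_fact_moment_binomial:
  assumes "0 \<le> \<theta>" "\<theta> \<le> 1"
  shows "integrable (measure_pmf (binomial_pmf \<alpha> \<theta>)) (falling_fact c)"
    and "(\<integral>n. falling_fact c n \<partial>measure_pmf (binomial_pmf \<alpha> \<theta>)) = marg_moment (-1) \<alpha> \<theta> c"
proof -
  have "pmf (binomial_pmf \<alpha> \<theta>) (m + c) * falling_fact c (m + c)
      = marg_moment (-1) \<alpha> \<theta> c * pmf (binomial_pmf (\<alpha> - c) \<theta>) m" for m
  proof (cases "m + c \<le> \<alpha>")
    case True
    have moment: "marg_moment (-1) \<alpha> \<theta> c = fact \<alpha> / fact (\<alpha> - c) * \<theta> ^ c"
      using falling_fact_add[of c "\<alpha> - c"] True by (simp add: marg_moment_def falling_fact_def)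
    have choose1: "real (\<alpha> choose (m + c)) = fact \<alpha> / (fact (m + c) * fact (\<alpha> - c - m))"
      using True by (simp add: binomial_fact diff_diff_add add.commute)
    have choose2: "real ((\<alpha> - c) choose m) = fact (\<alpha> - c) / (fact m * fact (\<alpha> - c - m))"
      using True by (simp add: binomial_fact)
    have "\<alpha> - (m + c) = \<alpha> - c - m"
      by simp
    then show ?thesis
      unfolding pmf_binomial[OF assms] choose1 choose2 moment falling_fact_add
      by (simp add: field_simps power_add)
  next
    case False
    then show ?thesis
      using assms by (cases "c \<le> \<alpha>") (auto simp: binomial_eq_0 marg_moment_def intro!: prod_zero bexI[of _ \<alpha>])
  qed
  then show "integrable (measure_pmf (binomial_pmf \<alpha> \<theta>)) (falling_fact c)"
    and "(\<integral>n. falling_fact c n \<partial>measure_pmf (binomial_pmf \<alpha> \<theta>)) = marg_moment (-1) \<alpha> \<theta> c"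
    by (rule falling_fact_moment_shift)+
qed

lemma falling_fact_moment_poisson:
  assumes "0 < r"
  shows "integrable (measure_pmf (poisson_pmf r)) (falling_fact c)"
    and "(\<integral>n. falling_fact c n \<partial>measure_pmf (poisson_pmf r)) = r ^ c"
proof -
  have "pmf (poisson_pmf r) (m + c) * falling_fact c (m + c) = r ^ c * pmf (poisson_pmf r) m" for m
    unfolding pmf_poisson[OF assms] falling_fact_add by (simp add: field_simps power_add)
  then show "integrable (measure_pmf (poisson_pmf r)) (falling_fact c)"
    and "(\<integral>n. falling_fact c n \<partial>measure_pmf (poisson_pmf r)) = r ^ c"
    by (rule falling_fact_moment_shift)+
qed

lemma falling_fact_moment_return_0:
  shows "integrable (measure_pmf (return_pmf 0)) (falling_fact c)"
    and "(\<integral>n. falling_fact c n \<partial>measure_pmf (return_pmf (0::nat))) = 0 ^ c"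
proof -
  have "pmf (return_pmf 0) (m + c) * falling_fact c (m + c) = 0 ^ c * pmf (return_pmf (0::nat)) m" for m
    by (cases c) (auto simp: indicator_def)
  then show "integrable (measure_pmf (return_pmf 0)) (falling_fact c)"
    and "(\<integral>n. falling_fact c n \<partial>measure_pmf (return_pmf (0::nat))) = 0 ^ c"
    by (rule falling_fact_moment_shift)+
qed

lemma prod_rising_eq_fact: "(\<Prod>j<c. real (Suc a) + real j) = fact (a + c) / fact a"
proof (induction c)
  case (Suc c)
  have "(\<Prod>j<Suc c. real (Suc a) + real j) = fact (a + c) / fact a * real (Suc (a + c))"
    unfolding prod.lessThan_Suc Suc.IH by simp
  also have "\<dots> = fact (a + Suc c) / fact a"
    by simp
  finally show ?case .
qed simp

lemma falling_fact_moment_neg_binomial: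
  assumes "0 \<le> \<theta>"
  shows "integrable (measure_pmf (neg_binomial_pmf (Suc a) (1 / (1 + \<theta>)))) (falling_fact c)"
    and "(\<integral>n. falling_fact c n \<partial>measure_pmf (neg_binomial_pmf (Suc a) (1 / (1 + \<theta>)))) = marg_moment 1 (Suc a) \<theta> c"
proof -
  define p where "p = 1 / (1 + \<theta>)"
  have p: "p \<in> {0<..1}" and q: "1 - p = \<theta> * p"
    using assms by (auto simp: p_def field_simps)
  have moment: "marg_moment 1 (Suc a) \<theta> c = \<theta> ^ c * (fact (a + c) / fact a)"
    using prod_rising_eq_fact[where a = a and c = c] by (simp add: marg_moment_def)
  have choose1: "real (m + c + Suc a - 1 choose (m + c)) = fact (m + c + a) / (fact (m + c) * fact a)" for m
    by (simp add: binomial_fact)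
  have choose2: "real (m + (Suc a + c) - 1 choose m) = fact (m + c + a) / (fact m * fact (a + c))" for m
    by (simp add: binomial_fact add_ac)
  have "pmf (neg_binomial_pmf (Suc a) p) (m + c) * falling_fact c (m + c)
      = marg_moment 1 (Suc a) \<theta> c * pmf (neg_binomial_pmf (Suc a + c) p) m" for m
    unfolding pmf_neg_binomial[OF p] q moment falling_fact_add choose1 choose2
    by (simp add: field_simps power_add power_mult_distrib)
  then show "integrable (measure_pmf (neg_binomial_pmf (Suc a) (1 / (1 + \<theta>)))) (falling_fact c)"
    and "(\<integral>n. falling_fact c n \<partial>measure_pmf (neg_binomial_pmf (Suc a) (1 / (1 + \<theta>)))) = marg_moment 1 (Suc a) \<theta> c"
    unfolding p_def by (rule falling_fact_moment_shift)+
qed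

lemma marg_falling_fact_moment:
  assumes "\<sigma> \<in> {-1, 0, 1}" and "\<theta> \<in> Theta \<sigma>" and "1 \<le> \<alpha>"
  shows "integrable (measure_pmf (marg \<sigma> \<alpha> \<theta>)) (falling_fact c)"
    and "(\<integral>n. falling_fact c n \<partial>measure_pmf (marg \<sigma> \<alpha> \<theta>)) = marg_moment \<sigma> \<alpha> \<theta> c"
proof -
  obtain a where a: "\<alpha> = Suc a"
    using assms(3) by (metis Suc_le_D One_nat_def)
  have "0 \<le> \<theta>"
    using assms(2) by (auto simp: Theta_def split: if_splits)
  from assms(1) consider "\<sigma> = -1" | "\<sigma> = 0" "\<theta> = 0" | "\<sigma> = 0" "\<theta> \<noteq> 0" | "\<sigma> = 1"
    by auto
  then have "integrable (measure_pmf (marg \<sigma> \<alpha> \<theta>)) (falling_fact c) \<and>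
    (\<integral>n. falling_fact c n \<partial>measure_pmf (marg \<sigma> \<alpha> \<theta>)) = marg_moment \<sigma> \<alpha> \<theta> c"
  proof cases
    case 1
    then show ?thesis
      using assms(2) falling_fact_moment_binomial[of \<theta> \<alpha> c] by (simp add: marg_def Theta_def)
  next
    case 2
    then show ?thesis
      using falling_fact_moment_return_0[of c] by (cases c) (simp_all add: marg_def marg_moment_def)
  next
    case 3
    then have "0 < real \<alpha> * \<theta>"
      using \<open>0 \<le> \<theta>\<close> a by simp
    then show ?thesis
      using 3 falling_fact_moment_poisson[of "real \<alpha> * \<theta>" c]
      by (simp add: marg_def marg_moment_def power_mult_distrib)
  next
    case 4
    then show ?thesis
      using falling_fact_moment_neg_binomial[OF \<open>0 \<le> \<theta>\<close>, of a c] a by (simp add: marg_def)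
  qed
  then show "integrable (measure_pmf (marg \<sigma> \<alpha> \<theta>)) (falling_fact c)"
    and "(\<integral>n. falling_fact c n \<partial>measure_pmf (marg \<sigma> \<alpha> \<theta>)) = marg_moment \<sigma> \<alpha> \<theta> c"
    by simp_all
qed

section \<open>Factorial moments under the product measure\<close>

lemma (in product_prob_space) PiM_integral_prod_finite:
  fixes f :: "'i \<Rightarrow> 'a \<Rightarrow> real"
  assumes S: "finite S" "S \<subseteq> I" and f: "\<And>i. i \<in> S \<Longrightarrow> integrable (M i) (f i)"
  shows "integrable (PiM I M) (\<lambda>\<omega>. \<Prod>i\<in>S. f i (\<omega> i))"
    and "(\<integral>\<omega>. (\<Prod>i\<in>S. f i (\<omega> i)) \<partial>PiM I M) = (\<Prod>i\<in>S. \<integral>x. f i x \<partial>M i)"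
proof -
  have restrict: "(\<lambda>\<omega>. restrict \<omega> S) \<in> measurable (PiM I M) (PiM S M)"
    using S by (intro measurable_restrict_subset)
  have meas: "(\<lambda>\<omega>. \<Prod>i\<in>S. f i (\<omega> i)) \<in> borel_measurable (PiM S M)"
    using f by measurable
  have distr: "distr (PiM I M) (PiM S M) (\<lambda>\<omega>. restrict \<omega> S) = PiM S M"
    using S by (intro distr_PiM_restrict_finite)
  have "(\<lambda>\<omega>. \<Prod>i\<in>S. f i (restrict \<omega> S i)) = (\<lambda>\<omega>. \<Prod>i\<in>S. f i (\<omega> i))"
    by (auto intro!: prod.cong)
  then show "integrable (PiM I M) (\<lambda>\<omega>. \<Prod>i\<in>S. f i (\<omega> i))"
    and "(\<integral>\<omega>. (\<Prod>i\<in>S. f i (\<omega> i)) \<partial>PiM I M) = (\<Prod>i\<in>S. \<integral>x. f i x \<partial>M i)"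
    using product_integrable_prod[OF S(1) f] product_integral_prod[OF S(1) f]
      integrable_distr_eq[OF restrict meas] integral_distr[OF restrict meas] distr
    by simp_all
qed

text \<open>\<open>fmom_mean \<sigma> \<alpha> \<theta> x\<close> is \<open>\<theta>\<^sup>k \<pi>(x)\<close> in the notation of the paper.\<close>

definition fmom_mean :: "int \<Rightarrow> nat \<Rightarrow> real \<Rightarrow> 'a list \<Rightarrow> real" where
  "fmom_mean \<sigma> \<alpha> \<theta> xs = occ_prod (\<lambda>_ c. \<theta> * (real \<alpha> + of_int \<sigma> * real c)) {#} xs"

lemma fmom_mean_eq_prod_count:
  "fmom_mean \<sigma> \<alpha> \<theta> xs = (\<Prod>z\<in>set xs. marg_moment \<sigma> \<alpha> \<theta> (count (mset xs) z))"
  unfolding fmom_mean_def by (rule occ_prod_eq_prod_count) (simp_all add: marg_moment_def)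

lemma fmom_eq_prod_count: "fmom \<eta> xs = (\<Prod>z\<in>set xs. falling_fact (count (mset xs) z) (\<eta> z))"
  unfolding fmom_eq_occ_prod by (rule occ_prod_eq_prod_count) (simp_all add: falling_fact_Suc)

lemma fmom_nonneg: "0 \<le> fmom \<eta> xs"
  unfolding fmom_eq_prod_count by (intro prod_nonneg falling_fact_nonneg)

lemma prob_space_mu: "prob_space (mu \<sigma> \<alpha> \<theta>)"
  unfolding mu_def by (intro prob_space_PiM prob_space_measure_pmf)

lemma expectation_fmom:
  assumes "\<sigma> \<in> {-1, 0, 1}" and "\<theta> \<in> Theta \<sigma>" and "1 \<le> \<alpha>"
  shows "integrable (mu \<sigma> \<alpha> \<theta>) (\<lambda>\<eta>. fmom \<eta> xs)"
    and "(\<integral>\<eta>. fmom \<eta> xs \<partial>mu \<sigma> \<alpha> \<theta>) = fmom_mean \<sigma> \<alpha> \<theta> xs"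
proof -
  interpret product_prob_space "\<lambda>_. measure_pmf (marg \<sigma> \<alpha> \<theta>)" UNIV
    by unfold_locales
  note moment = marg_falling_fact_moment[OF assms]
  show "integrable (mu \<sigma> \<alpha> \<theta>) (\<lambda>\<eta>. fmom \<eta> xs)"
    and "(\<integral>\<eta>. fmom \<eta> xs \<partial>mu \<sigma> \<alpha> \<theta>) = fmom_mean \<sigma> \<alpha> \<theta> xs"
    unfolding fmom_eq_prod_count fmom_mean_eq_prod_count mu_def
    using PiM_integral_prod_finite[of "set xs" "\<lambda>z. falling_fact (count (mset xs) z)"] moment
    by simp_all
qed

lemma abs_fmom_mean_le:
  assumes "\<sigma> \<in> {-1, 0, 1}" and "0 \<le> \<theta>" and "length xs \<le> L"
  shows "\<bar>fmom_mean \<sigma> \<alpha> \<theta> xs\<bar> \<le> (\<theta> * (real \<alpha> + real L) + 1) ^ L"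
proof -
  let ?b = "\<theta> * (real \<alpha> + real L) + 1"
  have "\<bar>\<theta> * (real \<alpha> + of_int \<sigma> * real c)\<bar> \<le> ?b" if "c < L" for c
  proof -
    have "\<bar>real \<alpha> + of_int \<sigma> * real c\<bar> \<le> real \<alpha> + real L"
      using assms(1) that by auto
    then show ?thesis
      using assms(2) mult_left_mono by (fastforce simp: abs_mult)
  qed
  then have "\<bar>fmom_mean \<sigma> \<alpha> \<theta> xs\<bar> \<le> ?b ^ length xs"
    unfolding fmom_mean_def using assms(3) by (intro abs_occ_prod_le) simp
  also have "\<dots> \<le> ?b ^ L"
    using assms by (intro power_increasing) simp_all
  finally show ?thesis .
qed

lemma curly_eq_contractions:
  "curly h \<eta> xs ys = (\<Sum>J | J \<subseteq> {..<length ys} \<and> card J = h.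
     fmom \<eta> (xs @ nths ys ({..<length ys} - J)) * contractions xs {..<length xs} J ys)"
  by (simp add: curly_def contractions_def atLeast0LessThan)

lemma expectation_curly:
  assumes "\<sigma> \<in> {-1, 0, 1}" and "\<theta> \<in> Theta \<sigma>" and "1 \<le> \<alpha>"
  shows "integrable (mu \<sigma> \<alpha> \<theta>) (\<lambda>\<eta>. curly h \<eta> xs ys)"
    and "(\<integral>\<eta>. curly h \<eta> xs ys \<partial>mu \<sigma> \<alpha> \<theta>) = (\<Sum>J | J \<subseteq> {..<length ys} \<and> card J = h.
      fmom_mean \<sigma> \<alpha> \<theta> (xs @ nths ys ({..<length ys} - J)) * contractions xs {..<length xs} J ys)"
proof -
  note fmom = expectation_fmom[OF assms]
  show "integrable (mu \<sigma> \<alpha> \<theta>) (\<lambda>\<eta>. curly h \<eta> xs ys)"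
    unfolding curly_eq_contractions
    by (intro Bochner_Integration.integrable_sum Bochner_Integration.integrable_mult_left fmom)
  show "(\<integral>\<eta>. curly h \<eta> xs ys \<partial>mu \<sigma> \<alpha> \<theta>) = (\<Sum>J | J \<subseteq> {..<length ys} \<and> card J = h.
      fmom_mean \<sigma> \<alpha> \<theta> (xs @ nths ys ({..<length ys} - J)) * contractions xs {..<length xs} J ys)"
    unfolding curly_eq_contractions
    by (subst Bochner_Integration.integral_sum) (simp_all add: fmom)
qed

lemma fmom_mean_mult_eq_sum_curly:
  assumes "\<sigma> \<in> {-1, 0, 1}" and "\<theta> \<in> Theta \<sigma>" and "1 \<le> \<alpha>"
  shows "fmom_mean \<sigma> \<alpha> \<theta> xs * fmom_mean \<sigma> \<alpha> \<theta> ys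
    = (\<Sum>h = 0..length ys. (- of_int \<sigma> * \<theta>) ^ h * (\<integral>\<eta>. curly h \<eta> xs ys \<partial>mu \<sigma> \<alpha> \<theta>))"
proof -
  let ?F = "\<lambda>_ c. \<theta> * (real \<alpha> + of_int \<sigma> * real c)"
  let ?s = "of_int \<sigma> * \<theta>"
  let ?g = "\<lambda>J. (- ?s) ^ card J * occ_prod ?F {#} (xs @ nths ys ({..<length ys} - J)) * contractions xs {..<length xs} J ys"
  have "fmom_mean \<sigma> \<alpha> \<theta> xs * fmom_mean \<sigma> \<alpha> \<theta> ys = contraction_sum ?F ?s xs {..<length xs} ys"
    by (subst contraction_sum_eq) (simp_all add: fmom_mean_def algebra_simps)
  also have "\<dots> = (\<Sum>h = 0..length ys. \<Sum>J | J \<in> Pow {..<length ys} \<and> card J = h. ?g J)"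
    unfolding contraction_sum_def
    by (rule sum.group[symmetric]) (auto simp: card_mono[of "{..<length ys}", THEN le_trans])
  also have "\<dots> = (\<Sum>h = 0..length ys. (- ?s) ^ h * (\<integral>\<eta>. curly h \<eta> xs ys \<partial>mu \<sigma> \<alpha> \<theta>))"
    by (intro sum.cong refl) (simp add: expectation_curly[OF assms] fmom_mean_def sum_distrib_left mult.assoc)
  finally show ?thesis
    by simp
qed

lemma contraction_term_le:
  assumes "\<sigma> \<in> {-1, 0, 1}" and "0 \<le> \<theta>" and J: "J \<subseteq> {..<length ys}"
  shows "fmom_mean \<sigma> \<alpha> \<theta> (xs @ nths ys ({..<length ys} - J)) * contractions xs {..<length xs} J ys
    \<le> (\<theta> * (real \<alpha> + real (length xs + length ys)) + 1) ^ (length xs + length ys)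
        * real (Suc (length xs)) ^ length ys"
proof (rule mult_mono)
  have "length (nths ys ({..<length ys} - J)) \<le> length ys"
    unfolding length_nths using card_mono[of "{..<length ys}" "{i. i < length ys \<and> i \<in> {..<length ys} - J}"]
    by auto
  then show "fmom_mean \<sigma> \<alpha> \<theta> (xs @ nths ys ({..<length ys} - J))
      \<le> (\<theta> * (real \<alpha> + real (length xs + length ys)) + 1) ^ (length xs + length ys)"
    using abs_fmom_mean_le[OF assms(1,2), of "xs @ nths ys ({..<length ys} - J)" "length xs + length ys" \<alpha>]
    by simp
  have "finite J" "card J \<le> length ys"
    using J finite_subset card_mono[of "{..<length ys}" J] by auto
  then have "contractions xs {..<length xs} J ys \<le> real (length xs) ^ card J"
    using contractions_le[of "{..<length xs}" J xs ys] by simp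
  also have "\<dots> \<le> real (Suc (length xs)) ^ card J"
    by (intro power_mono) simp_all
  also have "\<dots> \<le> real (Suc (length xs)) ^ length ys"
    using \<open>card J \<le> length ys\<close> by (intro power_increasing) simp_all
  finally show "contractions xs {..<length xs} J ys \<le> real (Suc (length xs)) ^ length ys" .
qed (simp_all add: contractions_nonneg assms(2))

lemma integral_abs_curly_le:
  assumes "\<sigma> \<in> {-1, 0, 1}" and "\<theta> \<in> Theta \<sigma>" and "1 \<le> \<alpha>"
  shows "(\<integral>\<eta>. \<bar>curly h \<eta> xs ys\<bar> \<partial>mu \<sigma> \<alpha> \<theta>)
    \<le> 2 ^ length ys * (\<theta> * (real \<alpha> + real (length xs + length ys)) + 1) ^ (length xs + length ys)
        * real (Suc (length xs)) ^ length ys"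
proof -
  let ?B = "(\<theta> * (real \<alpha> + real (length xs + length ys)) + 1) ^ (length xs + length ys)
    * real (Suc (length xs)) ^ length ys"
  let ?S = "{J. J \<subseteq> {..<length ys} \<and> card J = h}"
  have "0 \<le> \<theta>"
    using assms(2) by (auto simp: Theta_def split: if_splits)
  have "card ?S \<le> card (Pow {..<length ys})"
    by (intro card_mono) auto
  then have card_le: "real (card ?S) \<le> 2 ^ length ys"
    by (simp add: card_Pow)
  have "(\<integral>\<eta>. \<bar>curly h \<eta> xs ys\<bar> \<partial>mu \<sigma> \<alpha> \<theta>) = (\<integral>\<eta>. curly h \<eta> xs ys \<partial>mu \<sigma> \<alpha> \<theta>)"
    by (simp add: curly_eq_contractions fmom_nonneg contractions_nonneg sum_nonneg)
  also have "\<dots> \<le> real (card ?S) * ?B"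
    unfolding expectation_curly[OF assms]
    by (rule sum_bounded_above) (use contraction_term_le[OF assms(1) \<open>0 \<le> \<theta>\<close>] in auto)
  also have "\<dots> \<le> 2 ^ length ys * ?B"
    using card_le \<open>0 \<le> \<theta>\<close> by (intro mult_right_mono) simp_all
  finally show ?thesis
    by (simp add: mult.assoc)
qed

section \<open>Expectations of the fields\<close>

lemma expectation_pairing:
  fixes G :: "(real ^ 'd::finite) list \<Rightarrow> real"
  assumes moments: "\<sigma> \<in> {-1, 0, 1}" "\<theta> \<in> Theta \<sigma>" "1 \<le> \<alpha>"
    and N: "1 \<le> N" and G: "schwartz k G"
  shows "(\<integral>\<eta>. pairing k G N \<eta> \<partial>(mu \<sigma> \<alpha> \<theta> :: (int ^ 'd \<Rightarrow> nat) measure)) =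
    1 / real N ^ (k * CARD('d)) * (\<integral>xs. G (map (scale_site N) xs) * fmom_mean \<sigma> \<alpha> \<theta> xs
      \<partial>count_space {xs :: (int ^ 'd) list. length xs = k})"
proof -
  have "0 \<le> \<theta>"
    using moments(2) by (auto simp: Theta_def split: if_splits)
  let ?mu = "mu \<sigma> \<alpha> \<theta> :: (int ^ 'd \<Rightarrow> nat) measure"
  let ?A = "{xs :: (int ^ 'd) list. length xs = k}"
  have "(\<integral>\<eta>. \<bar>fmom \<eta> xs\<bar> \<partial>?mu) \<le> (\<theta> * (real \<alpha> + real k) + 1) ^ k" if "xs \<in> ?A" for xs
    using abs_fmom_mean_le[OF moments(1) \<open>0 \<le> \<theta>\<close>, of xs k \<alpha>] that
    by (simp add: fmom_nonneg expectation_fmom[OF moments])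
  then have "(\<integral>\<eta>. (\<integral>xs. G (map (scale_site N) xs) * fmom \<eta> xs \<partial>count_space ?A) \<partial>?mu)
      = (\<integral>xs. G (map (scale_site N) xs) * (\<integral>\<eta>. fmom \<eta> xs \<partial>?mu) \<partial>count_space ?A)"
    by (intro expectation_weighted_sum(2)[OF prob_space_mu[of \<sigma> \<alpha> \<theta>] countable_lists_length
          schwartz_lattice_integrable[OF N G]] expectation_fmom[OF moments])
  then show ?thesis
    by (simp add: pairing_def infsum_eq_integral_count_space expectation_fmom[OF moments])
qed

lemma expectation_pairing_tensor:
  fixes G H :: "(real ^ 'd::finite) list \<Rightarrow> real"
  assumes moments: "\<sigma> \<in> {-1, 0, 1}" "\<theta> \<in> Theta \<sigma>" "1 \<le> \<alpha>"
    and N: "1 \<le> N" and G: "schwartz k G" and H: "schwartz l H"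
  shows "(\<integral>\<eta>. pairing_tensor k l h G H N \<eta> \<partial>(mu \<sigma> \<alpha> \<theta> :: (int ^ 'd \<Rightarrow> nat) measure)) =
    1 / real N ^ ((k + l - h) * CARD('d)) *
    (\<integral>xs. G (map (scale_site N) xs) *
      (\<integral>ys. H (map (scale_site N) ys) * (\<integral>\<eta>. curly h \<eta> xs ys \<partial>(mu \<sigma> \<alpha> \<theta> :: (int ^ 'd \<Rightarrow> nat) measure))
        \<partial>count_space {ys :: (int ^ 'd) list. length ys = l}) \<partial>count_space {xs :: (int ^ 'd) list. length xs = k})"
proof -
  let ?mu = "mu \<sigma> \<alpha> \<theta> :: (int ^ 'd \<Rightarrow> nat) measure"
  let ?A = "{xs :: (int ^ 'd) list. length xs = k}"
  let ?B = "{ys :: (int ^ 'd) list. length ys = l}"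
  let ?g = "\<lambda>xs. G (map (scale_site N) xs)"
  let ?b = "\<lambda>ys. H (map (scale_site N) ys)"
  let ?K = "2 ^ l * (\<theta> * (real \<alpha> + real (k + l)) + 1) ^ (k + l) * real (Suc k) ^ l"
  define Y where "Y xs \<eta> = (\<integral>ys. ?b ys * curly h \<eta> xs ys \<partial>count_space ?B)" for xs \<eta>
  have curly_bound: "(\<integral>\<eta>. \<bar>curly h \<eta> xs ys\<bar> \<partial>?mu) \<le> ?K" if "xs \<in> ?A" "ys \<in> ?B" for xs ys
    using integral_abs_curly_le[OF moments, of h xs ys] that by simp
  have Y: "integrable ?mu (Y xs)"
    "(\<integral>\<eta>. Y xs \<eta> \<partial>?mu) = (\<integral>ys. ?b ys * (\<integral>\<eta>. curly h \<eta> xs ys \<partial>?mu) \<partial>count_space ?B)"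
    "(\<integral>\<eta>. \<bar>Y xs \<eta>\<bar> \<partial>?mu) \<le> ?K * (\<integral>ys. \<bar>?b ys\<bar> \<partial>count_space ?B)"
    if "xs \<in> ?A" for xs
    unfolding Y_def
    using expectation_weighted_sum[OF prob_space_mu[of \<sigma> \<alpha> \<theta>] countable_lists_length schwartz_lattice_integrable[OF N H],
        where X = "\<lambda>ys \<eta>. curly h \<eta> xs ys" and B = ?K]
      curly_bound[OF that] expectation_curly(1)[OF moments]
    by auto
  have "pairing_tensor k l h G H N \<eta> = 1 / real N ^ ((k + l - h) * CARD('d)) *
      (\<integral>xs. ?g xs * Y xs \<eta> \<partial>count_space ?A)" for \<eta>
    by (simp add: pairing_tensor_def Y_def infsum_eq_integral_count_space mult.assoc flip: infsum_cmult_right')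
  then have "(\<integral>\<eta>. pairing_tensor k l h G H N \<eta> \<partial>?mu) = 1 / real N ^ ((k + l - h) * CARD('d)) *
      (\<integral>\<eta>. (\<integral>xs. ?g xs * Y xs \<eta> \<partial>count_space ?A) \<partial>?mu)"
    by simp
  also have "(\<integral>\<eta>. (\<integral>xs. ?g xs * Y xs \<eta> \<partial>count_space ?A) \<partial>?mu)
      = (\<integral>xs. ?g xs * (\<integral>\<eta>. Y xs \<eta> \<partial>?mu) \<partial>count_space ?A)"
    by (rule expectation_weighted_sum(2)[OF prob_space_mu[of \<sigma> \<alpha> \<theta>] countable_lists_length
          schwartz_lattice_integrable[OF N G],
          where B = "?K * (\<integral>ys. \<bar>?b ys\<bar> \<partial>count_space ?B)"]) (use Y in auto)
  also have "\<dots> = (\<integral>xs. ?g xs * (\<integral>ys. ?b ys * (\<integral>\<eta>. curly h \<eta> xs ys \<partial>?mu) \<partial>count_space ?B)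
      \<partial>count_space ?A)"
    by (intro Bochner_Integration.integral_cong refl) (simp add: Y(2))
  finally show ?thesis .
qed

lemma lattice_sum_product_expansion:
  fixes G H :: "(real ^ 'd::finite) list \<Rightarrow> real"
  assumes moments: "\<sigma> \<in> {-1, 0, 1}" "\<theta> \<in> Theta \<sigma>" "1 \<le> \<alpha>"
    and N: "1 \<le> N" and G: "schwartz k G" and H: "schwartz l H"
  shows "(\<integral>xs. G (map (scale_site N) xs) * fmom_mean \<sigma> \<alpha> \<theta> xs \<partial>count_space {xs :: (int ^ 'd) list. length xs = k})
       * (\<integral>ys. H (map (scale_site N) ys) * fmom_mean \<sigma> \<alpha> \<theta> ys \<partial>count_space {ys :: (int ^ 'd) list. length ys = l})
    = (\<Sum>h = 0..l. (- of_int \<sigma> * \<theta>) ^ h *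
        (\<integral>xs. G (map (scale_site N) xs) *
          (\<integral>ys. H (map (scale_site N) ys) * (\<integral>\<eta>. curly h \<eta> xs ys \<partial>(mu \<sigma> \<alpha> \<theta> :: (int ^ 'd \<Rightarrow> nat) measure))
            \<partial>count_space {ys :: (int ^ 'd) list. length ys = l}) \<partial>count_space {xs :: (int ^ 'd) list. length xs = k}))"
proof -
  let ?A = "{xs :: (int ^ 'd) list. length xs = k}"
  let ?B = "{ys :: (int ^ 'd) list. length ys = l}"
  let ?g = "\<lambda>xs. G (map (scale_site N) xs)"
  let ?b = "\<lambda>ys. H (map (scale_site N) ys)"
  let ?m = "fmom_mean \<sigma> \<alpha> \<theta>"
  let ?E = "\<lambda>h xs ys. \<integral>\<eta>. curly h \<eta> xs ys \<partial>(mu \<sigma> \<alpha> \<theta> :: (int ^ 'd \<Rightarrow> nat) measure)"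
  let ?t = "- of_int \<sigma> * \<theta>"
  let ?K = "2 ^ l * (\<theta> * (real \<alpha> + real (k + l)) + 1) ^ (k + l) * real (Suc k) ^ l"
  have "\<bar>?E h xs ys\<bar> \<le> ?K" if "xs \<in> ?A" "ys \<in> ?B" for h xs ys
    using order_trans[OF integral_abs_bound integral_abs_curly_le[OF moments, of h xs ys]] that by simp
  then have E_bound: "\<bar>?t ^ h * ?E h xs ys\<bar> \<le> \<bar>?t\<bar> ^ h * ?K" if "xs \<in> ?A" "ys \<in> ?B" for h xs ys
    using that by (simp add: abs_mult power_abs mult_left_mono)
  have "(\<integral>xs. ?g xs * ?m xs \<partial>count_space ?A) * (\<integral>ys. ?b ys * ?m ys \<partial>count_space ?B)
      = (\<integral>xs. ?g xs * (\<integral>ys. ?b ys * (?m xs * ?m ys) \<partial>count_space ?B) \<partial>count_space ?A)"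
    unfolding integral_mult_left_zero[symmetric]
    by (simp only: mult.left_commute[of "?b _"] integral_mult_right_zero mult.assoc)
  also have "\<dots> = (\<integral>xs. ?g xs * (\<integral>ys. ?b ys * (\<Sum>h = 0..l. ?t ^ h * ?E h xs ys) \<partial>count_space ?B) \<partial>count_space ?A)"
    by (intro Bochner_Integration.integral_cong refl arg_cong[where f = "\<lambda>x. _ * x"])
      (simp add: fmom_mean_mult_eq_sum_curly[OF moments])
  also have "\<dots> = (\<Sum>h = 0..l. \<integral>xs. ?g xs * (\<integral>ys. ?b ys * (?t ^ h * ?E h xs ys) \<partial>count_space ?B) \<partial>count_space ?A)"
    by (rule integral_count_space_double_sum[OF schwartz_lattice_integrable[OF N G]
        schwartz_lattice_integrable[OF N H], where C = "\<lambda>h. \<bar>?t\<bar> ^ h * ?K"]) (use E_bound in auto)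
  also have "\<dots> = (\<Sum>h = 0..l. ?t ^ h * (\<integral>xs. ?g xs * (\<integral>ys. ?b ys * ?E h xs ys \<partial>count_space ?B) \<partial>count_space ?A))"
    by (simp only: mult.left_commute[of "?b _"] mult.left_commute[of "?g _"] integral_mult_right_zero)
  finally show ?thesis .
qed

lemma scaling_factors_split:
  fixes x s \<theta> :: real
  assumes "h \<le> k + l"
  shows "1 / x ^ (k * d) * (1 / x ^ (l * d)) * (- s * \<theta>) ^ h
    = \<theta> ^ h * (- s) ^ h / x ^ (h * d) * (1 / x ^ ((k + l - h) * d))"
proof -
  have "x ^ (h * d) * x ^ ((k + l - h) * d) = x ^ (k * d) * x ^ (l * d)"
    using assms by (simp flip: power_add add_mult_distrib)
  moreover have "(- s * \<theta>) ^ h = \<theta> ^ h * (- s) ^ h"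
    by (simp only: power_mult_distrib[symmetric]) (simp add: mult.commute)
  ultimately show ?thesis
    by (simp add: field_simps)
qed

theorem lemma5p1:
  fixes k l \<alpha> N :: nat and \<sigma> :: int and \<theta> :: real
    and G H :: "(real ^ 'd::finite) list \<Rightarrow> real"
  assumes "1 \<le> l" and "l \<le> k" and "1 \<le> \<alpha>"
    and "schwartz k G" and "schwartz l H"
    and "\<sigma> \<in> {-1, 0, 1}" and "\<theta> \<in> Theta \<sigma>"
    and "1 \<le> N"
  shows "(\<integral>\<eta>. pairing k G N \<eta> \<partial>(mu \<sigma> \<alpha> \<theta> :: (int ^ 'd \<Rightarrow> nat) measure)) *
         (\<integral>\<eta>. pairing l H N \<eta> \<partial>(mu \<sigma> \<alpha> \<theta> :: (int ^ 'd \<Rightarrow> nat) measure)) =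
         (\<Sum>h = 0..l. \<theta> ^ h * (- of_int \<sigma>) ^ h / real N ^ (h * CARD('d)) *
            (\<integral>\<eta>. pairing_tensor k l h G H N \<eta> \<partial>(mu \<sigma> \<alpha> \<theta> :: (int ^ 'd \<Rightarrow> nat) measure)))"
proof -
  note moments = assms(6,7,3) and G = assms(4) and H = assms(5) and N = assms(8)
  let ?D = "\<lambda>h. \<integral>xs. G (map (scale_site N) xs) *
    (\<integral>ys. H (map (scale_site N) ys) * (\<integral>\<eta>. curly h \<eta> xs ys \<partial>(mu \<sigma> \<alpha> \<theta> :: (int ^ 'd \<Rightarrow> nat) measure))
      \<partial>count_space {ys :: (int ^ 'd) list. length ys = l}) \<partial>count_space {xs :: (int ^ 'd) list. length xs = k}"
  let ?c = "\<lambda>n. 1 / real N ^ (n * CARD('d))"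
  have "(\<integral>\<eta>. pairing k G N \<eta> \<partial>(mu \<sigma> \<alpha> \<theta> :: (int ^ 'd \<Rightarrow> nat) measure)) *
      (\<integral>\<eta>. pairing l H N \<eta> \<partial>(mu \<sigma> \<alpha> \<theta> :: (int ^ 'd \<Rightarrow> nat) measure))
      = ?c k * ?c l *
        ((\<integral>xs. G (map (scale_site N) xs) * fmom_mean \<sigma> \<alpha> \<theta> xs \<partial>count_space {xs :: (int ^ 'd) list. length xs = k})
       * (\<integral>ys. H (map (scale_site N) ys) * fmom_mean \<sigma> \<alpha> \<theta> ys \<partial>count_space {ys :: (int ^ 'd) list. length ys = l}))"
    unfolding expectation_pairing[OF moments N G] expectation_pairing[OF moments N H] by (simp only: mult_ac)
  also have "\<dots> = (\<Sum>h = 0..l. ?c k * ?c l * (- of_int \<sigma> * \<theta>) ^ h * ?D h)"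
    unfolding lattice_sum_product_expansion[OF moments N G H] sum_distrib_left by (simp only: mult.assoc)
  also have "\<dots> = (\<Sum>h = 0..l. \<theta> ^ h * (- of_int \<sigma>) ^ h / real N ^ (h * CARD('d)) * (?c (k + l - h) * ?D h))"
    by (intro sum.cong refl, subst scaling_factors_split) (auto simp: mult.assoc)
  also have "\<dots> = (\<Sum>h = 0..l. \<theta> ^ h * (- of_int \<sigma>) ^ h / real N ^ (h * CARD('d)) *
      (\<integral>\<eta>. pairing_tensor k l h G H N \<eta> \<partial>(mu \<sigma> \<alpha> \<theta> :: (int ^ 'd \<Rightarrow> nat) measure)))"
    by (simp only: expectation_pairing_tensor[OF moments N G H])
  finally show ?thesis .
qed

end
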